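(* Let $h:\Phi^c\to\Psi^d$ be a random simple tabulation function with fully random character tables, in the asymptotic regime $|\Phi|\to\infty$ with $c=|\Phi|^{o(1)}$ and $(c+d)^c=|\Psi|^{o(1)}$. Let $k=|\Psi|^{1/(5c)}$ and let $q>0$ (possibly depending on the other parameters). Let $P^q$ be the probability of the event that there exist a key set $X\subseteq\Phi^c$ with $|X|\le k$ and a list $L$ of distinct input position characters, each occurring in some key of $X$, with $|L|\le kc$, such that (with respect to $X$ and $L$) at least $q|L|$ output characters are derivable. Then $P^q=o\big(|\Phi|^2/|\Psi|^q\big)$.
   Context: $\Psi=[2^m]$ is identified with bit strings and $\oplus$ is bitwise exclusive-or applied coordinatewise. A simple tabulation function has character tables $h_0,\dots,h_{c-1}:\Phi\to\Psi^d$ and $h(x)=\bigoplus_{i\in[c]}h_i(x_i)$; fully random means all table entries independent uniform. An input position character is a pair $(i,a)\in[c]\times\Phi$; a key $x=(x_0,\dots,x_{c-1})$ is identified with the set $\{(i,x_i):i\in[c]\}$. For keys $x,y$, $x\triangle y=\{(i,x_i),(i,y_i): i\in[c], x_i\ne y_i\}$. For $y\in\Psi^d$, $y_j$ is its $j$-th coordinate. Given a key set $X$ and a list $L$ (a sequence of distinct input position characters), a pair $(\alpha,j)$ with $\alpha$ in $L$ and $j\in[d]$ (the "output character $h_i(a)_j$" for $\alpha=(i,a)$) is derivable if there exist $x,y\in X$ such that $x\triangle y\subseteq L$, $\alpha$ is the last element of $x\triangle y$ in the order of $L$, and $h(x)_j=h(y)_j$. The number of derivable output characters is the number of such derivable pairs.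 *)

theory Defs
  imports "HOL-Probability.Probability" "HOL-Library.Landau_Symbols"
begin

text \<open>Phi = {..<u} (characters), Psi = {..<2^m} (bit strings of length m),
  keys are lists of length c over Phi. Character tables are encoded as one function
  T with T (i, a, j) = h_i(a)_j.\<close>

fun bigxor :: "(nat \<Rightarrow> nat) \<Rightarrow> nat \<Rightarrow> nat" where
  "bigxor f 0 = 0"
| "bigxor f (Suc n) = xor (bigxor f n) (f n)"

definition tables :: "nat \<Rightarrow> nat \<Rightarrow> nat \<Rightarrow> nat \<Rightarrow> (nat \<times> nat \<times> nat \<Rightarrow> nat) set" where
  "tables u m c d = PiE ({..<c} \<times> {..<u} \<times> {..<d}) (\<lambda>_. {..<2^m})"

definition random_tables :: "nat \<Rightarrow> nat \<Rightarrow> nat \<Rightarrow> nat \<Rightarrow> (nat \<times> nat \<times> nat \<Rightarrow> nat) pmf" where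
  "random_tables u m c d = pmf_of_set (tables u m c d)"

definition hval :: "nat \<Rightarrow> (nat \<times> nat \<times> nat \<Rightarrow> nat) \<Rightarrow> nat list \<Rightarrow> nat \<Rightarrow> nat" where
  "hval c T x j = bigxor (\<lambda>i. T (i, x ! i, j)) c"

definition keys :: "nat \<Rightarrow> nat \<Rightarrow> nat list set" where
  "keys u c = {x. length x = c \<and> set x \<subseteq> {..<u}}"

definition pchars :: "nat \<Rightarrow> nat list \<Rightarrow> (nat \<times> nat) set" where
  "pchars c x = {(i, x ! i) | i. i < c}"

definition symd :: "nat \<Rightarrow> nat list \<Rightarrow> nat list \<Rightarrow> (nat \<times> nat) set" where
  "symd c x y = {(i, x ! i) | i. i < c \<and> x ! i \<noteq> y ! i} \<union> {(i, y ! i) | i. i < c \<and> x ! i \<noteq> y ! i}"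

definition is_last_in :: "(nat \<times> nat) list \<Rightarrow> (nat \<times> nat) set \<Rightarrow> nat \<times> nat \<Rightarrow> bool" where
  "is_last_in L S \<alpha> \<longleftrightarrow> \<alpha> \<in> S \<and> (\<forall>\<beta>\<in>S. \<forall>i<length L. \<forall>j<length L. L ! i = \<beta> \<and> L ! j = \<alpha> \<longrightarrow> i \<le> j)"

definition derivable :: "nat \<Rightarrow> nat \<Rightarrow> (nat \<times> nat \<times> nat \<Rightarrow> nat) \<Rightarrow> nat list set \<Rightarrow> (nat \<times> nat) list
    \<Rightarrow> ((nat \<times> nat) \<times> nat) set" where
  "derivable c d T X L = {(\<alpha>, j). \<alpha> \<in> set L \<and> j < d \<and>
     (\<exists>x\<in>X. \<exists>y\<in>X. symd c x y \<subseteq> set L \<and> is_last_in L (symd c x y) \<alpha> \<and> hval c T x j = hval c T y j)}"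

definition bad_event :: "nat \<Rightarrow> nat \<Rightarrow> nat \<Rightarrow> nat \<Rightarrow> real \<Rightarrow> (nat \<times> nat \<times> nat \<Rightarrow> nat) set" where
  "bad_event u m c d q = {T. \<exists>X L. X \<subseteq> keys u c \<and>
      real (card X) \<le> 2 powr (real m / (5 * real c)) \<and>
      L \<noteq> [] \<and> distinct L \<and> (\<forall>\<alpha>\<in>set L. \<exists>x\<in>X. \<alpha> \<in> pchars c x) \<and>
      real (length L) \<le> 2 powr (real m / (5 * real c)) * real c \<and>
      real (card (derivable c d T X L)) \<ge> q * real (length L)}"

definition Pq :: "nat \<Rightarrow> nat \<Rightarrow> nat \<Rightarrow> nat \<Rightarrow> real \<Rightarrow> real" where
  "Pq u m c d q = measure_pmf.prob (random_tables u m c d) (bad_event u m c d q)"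

end

theory Submission
  imports Defs
begin

text \<open>For keys \<open>x\<close> and \<open>y\<close>, \<open>h(x) xor h(y)\<close> is the XOR of the entries of the position
  characters in \<open>x \<triangle> y\<close>. So if \<open>((i, a), j)\<close> is derivable, the entry \<open>h\<^sub>i(a)\<^sub>j\<close> is the XOR of the
  \<open>j\<close>-th entries of at most \<open>2c - 1\<close> position characters preceding \<open>(i, a)\<close> in \<open>L\<close>, and a bad table
  solves a triangular system of \<open>\<lceil>q l\<rceil>\<close> such equations, described by a list \<open>L\<close> of length
  \<open>l \<ge> 2\<close>, the entries on the left-hand sides and the sets of earlier characters on the right.
  A fixed system determines \<open>\<lceil>q l\<rceil>\<close> entries from the others, so it holds with probability
  \<open>2 ^ (-m \<lceil>q l\<rceil>)\<close>. As the growth condition bounds \<open>l d (l + 1) ^ (2c - 1)\<close> by \<open>2 ^ (9m/20)\<close>,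
  counting the systems gives \<open>P\<^sup>q \<le> \<Sum>\<^sub>l\<^sub>\<ge>\<^sub>2 t ^ l \<le> 4 t\<^sup>2\<close> with \<open>t = c u 2 ^ (-11 m q / 20)\<close>.
  Compared with \<open>u\<^sup>2 / 2 ^ (m q)\<close>, either this bound or the trivial bound \<open>P\<^sup>q \<le> 1\<close> leaves
  a ratio of at most \<open>4 u ^ (-1/11)\<close>.\<close>

section \<open>XOR over symmetric differences\<close>

definition xor_set :: "('a \<Rightarrow> nat) \<Rightarrow> 'a set \<Rightarrow> nat" where
  "xor_set f S = Finite_Set.fold (\<lambda>x acc. xor (f x) acc) 0 S"

interpretation xor_fold: comp_fun_commute "\<lambda>x acc. xor (f x) (acc :: nat)"
  by unfold_locales (auto simp: fun_eq_iff xor.left_commute)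

lemma xor_set_empty [simp]: "xor_set f {} = 0"
  by (simp add: xor_set_def)

lemma xor_set_insert [simp]:
  "finite S \<Longrightarrow> x \<notin> S \<Longrightarrow> xor_set f (insert x S) = xor (f x) (xor_set f S)"
  by (simp add: xor_set_def)

lemma xor_set_remove:
  "finite S \<Longrightarrow> x \<in> S \<Longrightarrow> xor_set f S = xor (f x) (xor_set f (S - {x}))"
  using xor_set_insert[of "S - {x}" x f] by (simp add: insert_absorb)

lemma xor_set_cong:
  "finite S \<Longrightarrow> (\<And>x. x \<in> S \<Longrightarrow> f x = g x) \<Longrightarrow> xor_set f S = xor_set g S"
  by (induction S rule: finite_induct) auto

lemma xor_eq_0_iff: "xor a b = (0::nat) \<longleftrightarrow> a = b"
  by (auto intro: bit_eqI simp: bit_eq_iff[of "xor a b" 0] bit_xor_iff)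

lemma symd_subset: "symd c x y \<subseteq> (\<lambda>i. (i, x ! i)) ` {..<c} \<union> (\<lambda>i. (i, y ! i)) ` {..<c}"
  unfolding symd_def by auto

lemma finite_symd [simp]: "finite (symd c x y)"
  using symd_subset by (rule finite_subset) auto

lemma card_symd_le: "card (symd c x y) \<le> 2 * c"
proof -
  have "card (symd c x y) \<le> card ((\<lambda>i. (i, x ! i)) ` {..<c}) + card ((\<lambda>i. (i, y ! i)) ` {..<c})"
    using symd_subset by (meson card_Un_le card_mono finite_UnI finite_imageI finite_lessThan order_trans)
  also have "\<dots> \<le> 2 * c"
    using card_image_le[of "{..<c}"] by (metis card_lessThan finite_lessThan add_mono mult_2)
  finally show ?thesis .
qed

lemma symd_Suc:
  "symd (Suc c) x y =
     (if x ! c = y ! c then symd c x y else insert (c, x ! c) (insert (c, y ! c) (symd c x y)))"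
  unfolding symd_def by (auto simp: less_Suc_eq)

lemma hval_xor_hval:
  "xor (hval c T x j) (hval c T y j) = xor_set (\<lambda>(i, a). T (i, a, j)) (symd c x y)"
proof (induction c)
  case 0
  then show ?case by (simp add: hval_def symd_def)
next
  case (Suc c)
  have fresh: "(c, a) \<notin> symd c x y" for a
    unfolding symd_def by auto
  show ?case
  proof (cases "x ! c = y ! c")
    case True
    then show ?thesis
      using Suc.IH[symmetric] unfolding hval_def
      by (simp add: symd_Suc) (intro bit_eqI, auto simp: bit_xor_iff)
  next
    case False
    then show ?thesis
      using Suc.IH[symmetric] fresh unfolding hval_def
      by (simp add: symd_Suc) (intro bit_eqI, auto simp: bit_xor_iff)
  qed
qed

lemma derivable_entry:
  assumes "hval c T x j = hval c T y j" and "\<alpha> \<in> symd c x y"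
  shows "T (fst \<alpha>, snd \<alpha>, j) = xor_set (\<lambda>(i, a). T (i, a, j)) (symd c x y - {\<alpha>})"
proof -
  have "xor_set (\<lambda>(i, a). T (i, a, j)) (symd c x y)
      = xor (T (fst \<alpha>, snd \<alpha>, j)) (xor_set (\<lambda>(i, a). T (i, a, j)) (symd c x y - {\<alpha>}))"
    using xor_set_remove[OF finite_symd assms(2)] by (simp add: split_beta)
  moreover have "xor_set (\<lambda>(i, a). T (i, a, j)) (symd c x y) = 0"
    using hval_xor_hval[of c T x j y] assms(1) by simp
  ultimately show ?thesis
    by (simp add: xor_eq_0_iff)
qed

text \<open>Values on \<open>D\<close> are recovered from those outside \<open>D\<close> in order of increasing rank \<open>r\<close>.\<close>

lemma triangular_solutions_eq:
  fixes r :: "'a \<Rightarrow> nat" and F :: "'a \<Rightarrow> ('a \<Rightarrow> 'b) \<Rightarrow> 'b"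
  assumes "D \<subseteq> A" and T: "T \<in> A \<rightarrow>\<^sub>E B" "\<forall>p\<in>D. T p = F p T"
    and T': "T' \<in> A \<rightarrow>\<^sub>E B" "\<forall>p\<in>D. T' p = F p T'"
    and local: "\<And>p T T'. p \<in> D \<Longrightarrow> (\<And>q. r q < r p \<Longrightarrow> T q = T' q) \<Longrightarrow> F p T = F p T'"
    and outside: "\<And>p. p \<in> A - D \<Longrightarrow> T p = T' p"
  shows "T = T'"
proof
  fix p
  show "T p = T' p"
  proof (induction p rule: measure_induct_rule[of r])
    case (less p)
    consider "p \<in> D" | "p \<in> A - D" | "p \<notin> A"
      using \<open>D \<subseteq> A\<close> by blast
    then show ?case
    proof cases
      case 1
      have "T p = F p T"
        using T(2) 1 ..
      also have "\<dots> = F p T'"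
        using 1 less.IH by (rule local)
      also have "\<dots> = T' p"
        using bspec[OF T'(2) 1] by (rule sym)
      finally show ?thesis .
    next
      case 2
      then show ?thesis
        by (rule outside)
    next
      case 3
      show ?thesis
        using PiE_arb[OF T(1) 3] PiE_arb[OF T'(1) 3] by (rule trans[OF _ sym])
    qed
  qed
qed

lemma card_triangular_solutions_le:
  fixes r :: "'a \<Rightarrow> nat" and F :: "'a \<Rightarrow> ('a \<Rightarrow> 'b) \<Rightarrow> 'b"
  assumes "finite A" and "finite B" and "D \<subseteq> A"
    and local: "\<And>p T T'. p \<in> D \<Longrightarrow> (\<And>q. r q < r p \<Longrightarrow> T q = T' q) \<Longrightarrow> F p T = F p T'"
  shows "card {T \<in> A \<rightarrow>\<^sub>E B. \<forall>p\<in>D. T p = F p T} \<le> card B ^ card (A - D)"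
proof -
  let ?S = "{T \<in> A \<rightarrow>\<^sub>E B. \<forall>p\<in>D. T p = F p T}"
  have "inj_on (\<lambda>T. restrict T (A - D)) ?S"
  proof (rule inj_onI)
    fix T T' assume T: "T \<in> ?S" and T': "T' \<in> ?S"
      and eq: "restrict T (A - D) = restrict T' (A - D)"
    show "T = T'"
    proof (rule triangular_solutions_eq[OF \<open>D \<subseteq> A\<close>])
      show "T \<in> A \<rightarrow>\<^sub>E B" "\<forall>p\<in>D. T p = F p T" "T' \<in> A \<rightarrow>\<^sub>E B" "\<forall>p\<in>D. T' p = F p T'"
        using conjunct1[OF CollectD[OF T]] conjunct2[OF CollectD[OF T]]
          conjunct1[OF CollectD[OF T']] conjunct2[OF CollectD[OF T']] .
      show "T p = T' p" if "p \<in> A - D" for p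
        using fun_cong[OF eq, of p] that by simp
    qed (rule local)
  qed
  moreover have "(\<lambda>T. restrict T (A - D)) ` ?S \<subseteq> (A - D) \<rightarrow>\<^sub>E B"
  proof (rule image_subsetI)
    fix T assume "T \<in> ?S"
    then have "T \<in> A \<rightarrow>\<^sub>E B"
      by simp
    then show "restrict T (A - D) \<in> (A - D) \<rightarrow>\<^sub>E B"
      by (simp add: restrict_PiE_iff PiE_iff)
  qed
  ultimately have "card ?S \<le> card ((A - D) \<rightarrow>\<^sub>E B)"
    by (intro card_inj_on_le) (simp_all add: finite_PiE assms(1,2))
  also have "\<dots> = card B ^ card (A - D)"
    using \<open>finite A\<close> by (simp add: card_PiE)
  finally show ?thesis .
qed

lemma card_UN_le_card_mult:
  assumes "finite I" and "\<And>i. i \<in> I \<Longrightarrow> real (card (A i)) \<le> M"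
  shows "real (card (\<Union>i\<in>I. A i)) \<le> real (card I) * M"
proof -
  have "real (card (\<Union>i\<in>I. A i)) \<le> (\<Sum>i\<in>I. real (card (A i)))"
    using card_UN_le[OF assms(1), of A] by (simp flip: of_nat_sum)
  also have "\<dots> \<le> real (card I) * M"
    using assms(2) by (rule sum_bounded_above)
  finally show ?thesis .
qed

lemma card_bounded_subsets_le:
  assumes "finite A"
  shows "card {S. S \<subseteq> A \<and> card S \<le> r} \<le> (card A + 1) ^ r"
proof -
  define lists where "lists = {xs. set xs \<subseteq> insert None (Some ` A) \<and> length xs = r}"
  have "{S. S \<subseteq> A \<and> card S \<le> r} \<subseteq> (\<lambda>xs. {a. Some a \<in> set xs}) ` lists"
  proof
    fix S assume S: "S \<in> {S. S \<subseteq> A \<and> card S \<le> r}"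
    then obtain ys where ys: "set ys = S" "distinct ys"
      using finite_distinct_list[OF finite_subset[OF _ assms]] by blast
    define xs where "xs = map Some ys @ replicate (r - card S) None"
    have "xs \<in> lists"
      using S ys distinct_card[OF ys(2)] by (auto simp: xs_def lists_def)
    moreover have "S = {a. Some a \<in> set xs}"
      using ys by (auto simp: xs_def)
    ultimately show "S \<in> (\<lambda>xs. {a. Some a \<in> set xs}) ` lists"
      by blast
  qed
  moreover have "finite lists"
    using assms by (simp add: lists_def finite_lists_length_eq)
  ultimately have "card {S. S \<subseteq> A \<and> card S \<le> r} \<le> card lists"
    by (meson card_image_le card_mono finite_imageI order_trans)
  also have "\<dots> = (card A + 1) ^ r"
    using assms by (simp add: lists_def card_lists_length_eq card_image)
  finally show ?thesis .
qed

section \<open>Derivable output characters as triangular systems\<close>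

definition position :: "'a list \<Rightarrow> 'a \<Rightarrow> nat" where
  "position L x = length (takeWhile (\<lambda>y. y \<noteq> x) L)"

lemma position_nth:
  assumes "distinct L" and "i < length L"
  shows "position L (L ! i) = i"
proof -
  have "takeWhile (\<lambda>y. y \<noteq> L ! i) L = take i L"
  proof (rule takeWhile_eq_take_P_nth)
    show "L ! k \<noteq> L ! i" if "k < i" and "k < length L" for k
      using that assms by (simp add: nth_eq_iff_index_eq)
  qed simp
  then show ?thesis
    using assms(2) by (simp add: position_def)
qed

definition table_entries :: "(nat \<times> nat) list \<Rightarrow> nat \<Rightarrow> (nat \<times> nat \<times> nat) set" where
  "table_entries L d = {(i, a, j). (i, a) \<in> set L \<and> j < d}"

definition earlier_sets :: "nat \<Rightarrow> (nat \<times> nat) list \<Rightarrow> nat \<times> nat \<times> nat \<Rightarrow> (nat \<times> nat) set set" where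
  "earlier_sets c L p = {S. S \<subseteq> set L \<and> card S \<le> 2 * c - 1 \<and>
     (\<forall>\<beta>\<in>S. position L \<beta> < position L (fst p, fst (snd p)))}"

definition solutions :: "nat \<Rightarrow> nat \<Rightarrow> nat \<Rightarrow> nat \<Rightarrow> (nat \<times> nat \<times> nat) set
    \<Rightarrow> (nat \<times> nat \<times> nat \<Rightarrow> (nat \<times> nat) set) \<Rightarrow> (nat \<times> nat \<times> nat \<Rightarrow> nat) set" where
  "solutions u m c d D W =
     {T \<in> tables u m c d. \<forall>p\<in>D. T p = xor_set (\<lambda>(i, a). T (i, a, snd (snd p))) (W p)}"

lemma table_entries_eq_image:
  "table_entries L d = (\<lambda>((i, a), j). (i, a, j)) ` (set L \<times> {..<d})"
  by (force simp: table_entries_def)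

lemma finite_table_entries: "finite (table_entries L d)"
  by (simp add: table_entries_eq_image)

lemma card_table_entries:
  assumes "distinct L"
  shows "card (table_entries L d) = length L * d"
proof -
  have "inj_on (\<lambda>((i, a), j). (i :: nat, a :: nat, j :: nat)) (set L \<times> {..<d})"
    by (auto simp: inj_on_def)
  then show ?thesis
    using distinct_card[OF assms] by (simp add: table_entries_eq_image card_image card_cartesian_product)
qed

lemma card_tables: "card (tables u m c d) = (2 ^ m) ^ (c * u * d)"
  by (simp add: tables_def card_PiE card_cartesian_product mult.assoc)

lemma card_solutions_le:
  assumes L: "set L \<subseteq> {..<c} \<times> {..<u}" and D: "D \<subseteq> table_entries L d"
    and W: "W \<in> PiE D (earlier_sets c L)"
  shows "real (card (solutions u m c d D W)) \<le> real (card (tables u m c d)) / 2 ^ (m * card D)"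
proof -
  define A where "A = {..<c} \<times> {..<u} \<times> {..<d}"
  have "D \<subseteq> A"
    using D L unfolding table_entries_def A_def by auto
  have "card (solutions u m c d D W) \<le> card {..<(2::nat) ^ m} ^ card (A - D)"
    unfolding solutions_def tables_def A_def[symmetric]
  proof (rule card_triangular_solutions_le[where r = "\<lambda>(i, a, j). position L (i, a)"])
    show "finite A" "D \<subseteq> A"
      using \<open>D \<subseteq> A\<close> by (simp_all add: A_def)
  next
    fix p and T T' :: "nat \<times> nat \<times> nat \<Rightarrow> nat"
    assume p: "p \<in> D" and agree: "\<And>q. (case q of (i, a, j) \<Rightarrow> position L (i, a))
        < (case p of (i, a, j) \<Rightarrow> position L (i, a)) \<Longrightarrow> T q = T' q"
    obtain i a j where p_eq: "p = (i, a, j)"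
      by (cases p) auto
    have "W p \<subseteq> set L" "\<forall>\<beta>\<in>W p. position L \<beta> < position L (i, a)"
      using W p unfolding earlier_sets_def p_eq by (auto simp: PiE_iff)
    then show "xor_set (\<lambda>(i, a). T (i, a, snd (snd p))) (W p)
             = xor_set (\<lambda>(i, a). T' (i, a, snd (snd p))) (W p)"
      using agree unfolding p_eq
      by (intro xor_set_cong) (auto intro: finite_subset)
  qed simp
  also have "\<dots> = (2 ^ m) ^ (card A - card D)"
    using \<open>D \<subseteq> A\<close> by (simp add: A_def card_Diff_subset finite_subset)
  finally have "real (card (solutions u m c d D W)) \<le> (2 ^ m) ^ (card A - card D)"
    using of_nat_mono by fastforce
  then have "real (card (solutions u m c d D W)) * 2 ^ (m * card D) \<le> (2 ^ m) ^ (card A - card D) * 2 ^ (m * card D)"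
    by simp
  also have "\<dots> = real (card (tables u m c d))"
    using card_mono[OF _ \<open>D \<subseteq> A\<close>]
    by (simp add: card_tables A_def card_cartesian_product power_mult[symmetric] power_add[symmetric]
        add_mult_distrib2[symmetric] mult.assoc)
  finally show ?thesis
    by (simp add: field_simps)
qed

lemma derivable_equation:
  assumes "distinct L" and "((i, a), j) \<in> derivable c d T X L"
  obtains S where "S \<subseteq> set L" and "card S \<le> 2 * c - 1"
    and "\<forall>\<beta>\<in>S. position L \<beta> < position L (i, a)"
    and "T (i, a, j) = xor_set (\<lambda>(i', a'). T (i', a', j)) S"
proof -
  obtain x y where sub: "symd c x y \<subseteq> set L" and last: "is_last_in L (symd c x y) (i, a)"
    and eq: "hval c T x j = hval c T y j"
    using assms(2) unfolding derivable_def by blast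
  define S where "S = symd c x y - {(i, a)}"
  have mem: "(i, a) \<in> symd c x y"
    using last unfolding is_last_in_def by blast
  have "card S \<le> 2 * c - 1"
    using card_symd_le[of c x y] mem by (simp add: S_def card_Diff_singleton)
  moreover have "position L \<beta> < position L (i, a)" if "\<beta> \<in> S" for \<beta>
  proof -
    obtain k k' where k: "k < length L" "L ! k = \<beta>" and k': "k' < length L" "L ! k' = (i, a)"
      using \<open>\<beta> \<in> S\<close> mem sub unfolding S_def by (metis Diff_iff in_set_conv_nth subsetD)
    have "k \<le> k'"
      using last \<open>\<beta> \<in> S\<close> k k' unfolding is_last_in_def S_def by blast
    moreover have "k \<noteq> k'"
      using \<open>\<beta> \<in> S\<close> k k' unfolding S_def by auto
    ultimately show ?thesis
      using k k' position_nth[OF assms(1)] by fastforce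
  qed
  moreover have "T (i, a, j) = xor_set (\<lambda>(i', a'). T (i', a', j)) S"
    using derivable_entry[OF eq mem] by (simp add: S_def)
  ultimately show thesis
    using sub by (intro that[of S]) (auto simp: S_def)
qed

lemma derivable_imp_two_le_length:
  assumes "distinct L" and "derivable c d T X L \<noteq> {}"
  shows "2 \<le> length L"
proof -
  obtain x y \<alpha> where sub: "symd c x y \<subseteq> set L" and "\<alpha> \<in> symd c x y"
    using assms(2) unfolding derivable_def is_last_in_def by blast
  then obtain i where "i < c" "x ! i \<noteq> y ! i"
    unfolding symd_def by blast
  then have "{(i, x ! i), (i, y ! i)} \<subseteq> set L" and "card {(i, x ! i), (i, y ! i)} = 2"
    using sub unfolding symd_def by auto
  then have "2 \<le> card (set L)"
    by (metis card_mono finite_set)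
  then show ?thesis
    using distinct_card[OF assms(1)] by simp
qed

section \<open>The union bound\<close>

definition length_bound :: "nat \<Rightarrow> nat \<Rightarrow> real" where
  "length_bound m c = 2 powr (real m / (5 * real c)) * real c"

definition char_lists :: "nat \<Rightarrow> nat \<Rightarrow> nat \<Rightarrow> (nat \<times> nat) list set" where
  "char_lists u c l = {L. length L = l \<and> distinct L \<and> set L \<subseteq> {..<c} \<times> {..<u}}"

definition entry_sets :: "(nat \<times> nat) list \<Rightarrow> nat \<Rightarrow> nat \<Rightarrow> (nat \<times> nat \<times> nat) set set" where
  "entry_sets L d s = {D. D \<subseteq> table_entries L d \<and> card D = s}"

definition solving_tables :: "nat \<Rightarrow> nat \<Rightarrow> nat \<Rightarrow> nat \<Rightarrow> nat \<Rightarrow> nat \<Rightarrow> (nat \<times> nat \<times> nat \<Rightarrow> nat) set" where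
  "solving_tables u m c d l s = (\<Union>L\<in>char_lists u c l. \<Union>D\<in>entry_sets L d s.
     \<Union>W\<in>PiE D (earlier_sets c L). solutions u m c d D W)"

lemma chars_in_range:
  assumes "X \<subseteq> keys u c" and "\<forall>\<alpha>\<in>set L. \<exists>x\<in>X. \<alpha> \<in> pchars c x"
  shows "set L \<subseteq> {..<c} \<times> {..<u}"
proof
  fix \<alpha> assume "\<alpha> \<in> set L"
  then obtain x i where "x \<in> keys u c" "i < c" "\<alpha> = (i, x ! i)"
    using assms unfolding pchars_def by blast
  then show "\<alpha> \<in> {..<c} \<times> {..<u}"
    unfolding keys_def by (auto dest: nth_mem)
qed

lemma derivable_entries_solve:
  assumes "distinct L" and "T \<in> tables u m c d"
    and D: "D \<subseteq> (\<lambda>((i, a), j). (i, a, j)) ` derivable c d T X L"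
  shows "\<exists>W\<in>PiE D (earlier_sets c L). T \<in> solutions u m c d D W"
proof -
  have "\<exists>S. S \<in> earlier_sets c L p \<and> T p = xor_set (\<lambda>(i, a). T (i, a, snd (snd p))) S"
    if "p \<in> D" for p
  proof -
    obtain i a j where p: "p = (i, a, j)" and "((i, a), j) \<in> derivable c d T X L"
      using \<open>p \<in> D\<close> D by auto
    obtain S where "S \<subseteq> set L" "card S \<le> 2 * c - 1"
      "\<forall>\<beta>\<in>S. position L \<beta> < position L (i, a)"
      and eq: "T (i, a, j) = xor_set (\<lambda>(i', a'). T (i', a', j)) S"
      by (rule derivable_equation[OF \<open>distinct L\<close> \<open>((i, a), j) \<in> _\<close>])
    then have "S \<in> earlier_sets c L p"
      by (simp add: earlier_sets_def p)
    moreover have "T p = xor_set (\<lambda>(i, a). T (i, a, snd (snd p))) S"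
      unfolding p snd_conv by (rule eq)
    ultimately show ?thesis
      by blast
  qed
  then obtain W where W: "\<And>p. p \<in> D \<Longrightarrow> W p \<in> earlier_sets c L p \<and>
      T p = xor_set (\<lambda>(i, a). T (i, a, snd (snd p))) (W p)"
    by metis
  have W_mem: "W p \<in> earlier_sets c L p" and W_eq: "T p = xor_set (\<lambda>(i, a). T (i, a, snd (snd p))) (W p)"
    if "p \<in> D" for p
    using W[OF that] by (rule conjunct1, rule conjunct2)
  have "restrict W D \<in> PiE D (earlier_sets c L)"
    using W_mem by simp
  moreover have "T \<in> solutions u m c d D (restrict W D)"
    unfolding solutions_def
  proof (intro CollectI conjI ballI)
    show "T \<in> tables u m c d"
      by fact
    fix p assume "p \<in> D"
    show "T p = xor_set (\<lambda>(i, a). T (i, a, snd (snd p))) (restrict W D p)"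
      unfolding restrict_apply'[OF \<open>p \<in> D\<close>] by (rule W_eq[OF \<open>p \<in> D\<close>])
  qed
  ultimately show ?thesis
    by blast
qed

lemma bad_tables_subset_solving_tables:
  assumes "q > 0"
  shows "tables u m c d \<inter> bad_event u m c d q
    \<subseteq> (\<Union>l\<in>{2..nat \<lfloor>length_bound m c\<rfloor>}. solving_tables u m c d l (nat \<lceil>q * real l\<rceil>))"
proof
  fix T assume T: "T \<in> tables u m c d \<inter> bad_event u m c d q"
  obtain X L where "X \<subseteq> keys u c" and "real (card X) \<le> 2 powr (real m / (5 * real c))"
    and "L \<noteq> []" and "distinct L" and chars: "\<forall>\<alpha>\<in>set L. \<exists>x\<in>X. \<alpha> \<in> pchars c x"
    and len: "real (length L) \<le> length_bound m c"
    and many: "q * real (length L) \<le> real (card (derivable c d T X L))"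
    using T unfolding bad_event_def length_bound_def[symmetric] by (elim IntE CollectE exE conjE) (rule that)
  define l where "l = length L"
  define E where "E = (\<lambda>((i, a), j). (i, a, j)) ` derivable c d T X L"
  have "L \<in> char_lists u c l"
    using chars_in_range[OF \<open>X \<subseteq> keys u c\<close> chars] \<open>distinct L\<close> by (simp add: char_lists_def l_def)
  have "inj_on (\<lambda>((i, a), j). (i :: nat, a :: nat, j :: nat)) (derivable c d T X L)"
    by (auto simp: inj_on_def)
  then have "card E = card (derivable c d T X L)"
    unfolding E_def by (rule card_image)
  then have "nat \<lceil>q * real l\<rceil> \<le> card E"
    using many by (simp add: l_def nat_le_iff ceiling_le_iff)
  then obtain D where "D \<subseteq> E" and "card D = nat \<lceil>q * real l\<rceil>"
    using obtain_subset_with_card_n by metis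
  moreover have "E \<subseteq> table_entries L d"
    unfolding E_def table_entries_def derivable_def by auto
  ultimately have "D \<in> entry_sets L d (nat \<lceil>q * real l\<rceil>)"
    by (simp add: entry_sets_def)
  have "0 < q * real l"
    using \<open>q > 0\<close> \<open>L \<noteq> []\<close> by (simp add: l_def)
  then have "derivable c d T X L \<noteq> {}"
    using many by (intro notI) (simp add: l_def)
  then have "l \<in> {2..nat \<lfloor>length_bound m c\<rfloor>}"
    using derivable_imp_two_le_length[OF \<open>distinct L\<close>] len by (simp add: l_def le_nat_floor)
  moreover obtain W where "W \<in> PiE D (earlier_sets c L)" and "T \<in> solutions u m c d D W"
    using derivable_entries_solve[OF \<open>distinct L\<close> _ \<open>D \<subseteq> E\<close>[unfolded E_def]] T by blast
  ultimately show "T \<in> (\<Union>l\<in>{2..nat \<lfloor>length_bound m c\<rfloor>}. solving_tables u m c d l (nat \<lceil>q * real l\<rceil>))"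
    using \<open>L \<in> char_lists u c l\<close> \<open>D \<in> entry_sets L d _\<close> unfolding solving_tables_def by blast
qed

lemma card_char_lists_le: "card (char_lists u c l) \<le> (c * u) ^ l"
proof -
  have "card (char_lists u c l) \<le> card {xs. set xs \<subseteq> {..<c} \<times> {..<u} \<and> length xs = l}"
    by (rule card_mono) (auto simp: char_lists_def finite_lists_length_eq)
  then show ?thesis
    by (simp add: card_lists_length_eq card_cartesian_product)
qed

lemma finite_char_lists: "finite (char_lists u c l)"
  by (rule finite_subset[of _ "{xs. set xs \<subseteq> {..<c} \<times> {..<u} \<and> length xs = l}"])
    (auto simp: char_lists_def finite_lists_length_eq)

lemma card_entry_sets_le:
  assumes "distinct L"
  shows "card (entry_sets L d s) \<le> (length L * d) ^ s"
proof -
  have "card (entry_sets L d s) = card (table_entries L d) choose s"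
    unfolding entry_sets_def by (rule n_subsets[OF finite_table_entries])
  also have "\<dots> \<le> (length L * d) ^ s"
    by (cases "s \<le> length L * d")
      (simp_all add: binomial_le_pow binomial_eq_0 card_table_entries[OF assms])
  finally show ?thesis .
qed

lemma finite_entry_sets: "finite (entry_sets L d s)"
  by (rule finite_subset[of _ "Pow (table_entries L d)"]) (auto simp: entry_sets_def finite_table_entries)

lemma card_earlier_choices_le:
  assumes "distinct L" and "finite D"
  shows "card (PiE D (earlier_sets c L)) \<le> ((length L + 1) ^ (2 * c - 1)) ^ card D"
proof -
  have "card (earlier_sets c L p) \<le> (length L + 1) ^ (2 * c - 1)" for p
  proof -
    have "card (earlier_sets c L p) \<le> card {S. S \<subseteq> set L \<and> card S \<le> 2 * c - 1}"
      by (rule card_mono) (auto simp: earlier_sets_def)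
    also have "\<dots> \<le> (length L + 1) ^ (2 * c - 1)"
      using card_bounded_subsets_le[of "set L" "2 * c - 1"] distinct_card[OF assms(1)] by simp
    finally show ?thesis .
  qed
  then have "(\<Prod>p\<in>D. card (earlier_sets c L p)) \<le> (\<Prod>p\<in>D. (length L + 1) ^ (2 * c - 1))"
    by (intro prod_mono) simp
  then show ?thesis
    using assms(2) by (simp add: card_PiE)
qed

lemma card_solutions_choices_le:
  assumes "L \<in> char_lists u c l" and "D \<in> entry_sets L d s"
  shows "real (card (\<Union>W\<in>PiE D (earlier_sets c L). solutions u m c d D W))
    \<le> (real (l + 1) ^ (2 * c - 1)) ^ s * (real (card (tables u m c d)) / 2 ^ (m * s))"
proof -
  have "distinct L" "length L = l" "set L \<subseteq> {..<c} \<times> {..<u}"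
    using assms(1) by (auto simp: char_lists_def)
  have "D \<subseteq> table_entries L d" "card D = s" "finite D"
    using assms(2) finite_subset[OF _ finite_table_entries] by (auto simp: entry_sets_def)
  have "real (card (\<Union>W\<in>PiE D (earlier_sets c L). solutions u m c d D W))
        \<le> real (card (PiE D (earlier_sets c L))) * (real (card (tables u m c d)) / 2 ^ (m * s))"
    using card_solutions_le[OF \<open>set L \<subseteq> _\<close> \<open>D \<subseteq> _\<close>] \<open>card D = s\<close> \<open>finite D\<close>
    by (intro card_UN_le_card_mult) (auto simp: earlier_sets_def intro!: finite_PiE)
  also have "\<dots> \<le> (real (l + 1) ^ (2 * c - 1)) ^ s * (real (card (tables u m c d)) / 2 ^ (m * s))"
    using of_nat_mono[OF card_earlier_choices_le[OF \<open>distinct L\<close> \<open>finite D\<close>, of c]]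
      \<open>card D = s\<close> \<open>length L = l\<close>
    by (intro mult_right_mono) simp_all
  finally show ?thesis .
qed

lemma card_solving_tables_le:
  "real (card (solving_tables u m c d l s))
   \<le> real (card (tables u m c d)) * real (c * u) ^ l * (real (l * d) * real (l + 1) ^ (2 * c - 1) / 2 ^ m) ^ s"
proof -
  define M where "M = (real (l + 1) ^ (2 * c - 1)) ^ s * (real (card (tables u m c d)) / 2 ^ (m * s))"
  have "real (card (\<Union>D\<in>entry_sets L d s. \<Union>W\<in>PiE D (earlier_sets c L). solutions u m c d D W))
        \<le> real (l * d) ^ s * M"
    if L: "L \<in> char_lists u c l" for L
  proof -
    have "real (card (\<Union>D\<in>entry_sets L d s. \<Union>W\<in>PiE D (earlier_sets c L). solutions u m c d D W))
          \<le> real (card (entry_sets L d s)) * M"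
      unfolding M_def using card_solutions_choices_le[OF L]
      by (intro card_UN_le_card_mult finite_entry_sets)
    also have "\<dots> \<le> real (l * d) ^ s * M"
      using of_nat_mono[OF card_entry_sets_le[of L d s]] L
      by (intro mult_right_mono) (simp_all add: M_def char_lists_def)
    finally show ?thesis .
  qed
  then have "real (card (solving_tables u m c d l s)) \<le> real (card (char_lists u c l)) * (real (l * d) ^ s * M)"
    unfolding solving_tables_def by (intro card_UN_le_card_mult finite_char_lists)
  also have "\<dots> \<le> real (c * u) ^ l * (real (l * d) ^ s * M)"
    using of_nat_mono[OF card_char_lists_le[of u c l]]
    by (intro mult_right_mono) (simp_all add: M_def)
  also have "\<dots> = real (card (tables u m c d)) * real (c * u) ^ l
      * (real (l * d) * real (l + 1) ^ (2 * c - 1) / 2 ^ m) ^ s"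
    by (simp add: M_def power_mult_distrib power_divide power_mult)
  finally show ?thesis .
qed

lemma Pq_le_sum:
  assumes "q > 0"
  shows "Pq u m c d q \<le> (\<Sum>l\<in>{2..nat \<lfloor>length_bound m c\<rfloor>}.
           real (c * u) ^ l * (real (l * d) * real (l + 1) ^ (2 * c - 1) / 2 ^ m) ^ nat \<lceil>q * real l\<rceil>)"
    (is "_ \<le> (\<Sum>l\<in>?I. ?w l)")
proof -
  define N where "N = real (card (tables u m c d))"
  have fin: "finite (tables u m c d)"
    by (simp add: tables_def finite_PiE)
  have "tables u m c d \<noteq> {}"
    by (simp add: tables_def PiE_eq_empty_iff lessThan_empty_iff)
  then have "N > 0"
    using fin by (simp add: N_def card_gt_0_iff)
  have "real (card (tables u m c d \<inter> bad_event u m c d q))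
        \<le> real (card (\<Union>l\<in>?I. solving_tables u m c d l (nat \<lceil>q * real l\<rceil>)))"
  proof (intro of_nat_mono card_mono)
    have "(\<Union>l\<in>?I. solving_tables u m c d l (nat \<lceil>q * real l\<rceil>)) \<subseteq> tables u m c d"
      by (auto simp: solving_tables_def solutions_def)
    then show "finite (\<Union>l\<in>?I. solving_tables u m c d l (nat \<lceil>q * real l\<rceil>))"
      using fin by (rule finite_subset)
  qed (rule bad_tables_subset_solving_tables[OF assms])
  also have "\<dots> \<le> (\<Sum>l\<in>?I. real (card (solving_tables u m c d l (nat \<lceil>q * real l\<rceil>))))"
    using card_UN_le[of ?I] by (simp flip: of_nat_sum)
  also have "\<dots> \<le> (\<Sum>l\<in>?I. N * ?w l)"
    using card_solving_tables_le by (intro sum_mono) (simp add: N_def mult.assoc)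
  finally have "real (card (tables u m c d \<inter> bad_event u m c d q)) / N \<le> (\<Sum>l\<in>?I. ?w l)"
    using \<open>N > 0\<close> by (simp add: divide_le_eq sum_distrib_left mult.commute)
  moreover have "Pq u m c d q = real (card (tables u m c d \<inter> bad_event u m c d q)) / N"
    using fin \<open>tables u m c d \<noteq> {}\<close> by (simp add: Pq_def random_tables_def measure_pmf_of_set N_def)
  ultimately show ?thesis
    by simp
qed

section \<open>Estimates\<close>

lemma ln_length_le:
  assumes "1 \<le> c" and "real l \<le> length_bound m c"
  shows "ln (real l + 1) \<le> ln 2 + real m / (5 * real c) * ln 2 + ln (real c)"
proof -
  have "1 * 1 \<le> 2 powr (real m / (5 * real c)) * real c"
    using \<open>1 \<le> c\<close> by (intro mult_mono ge_one_powr_ge_zero) auto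
  then have "1 \<le> length_bound m c"
    by (simp add: length_bound_def)
  then have "ln (real l + 1) \<le> ln (2 * length_bound m c)"
    using assms(2) by simp
  also have "\<dots> = ln 2 + real m / (5 * real c) * ln 2 + ln (real c)"
    using \<open>1 \<le> c\<close> by (simp add: length_bound_def ln_mult ln_powr)
  finally show ?thesis .
qed

lemma weight_le:
  fixes m c d l :: nat
  assumes "1 \<le> c" and "1 \<le> d" and "1 \<le> l" and l_le: "real l \<le> length_bound m c"
    and small: "5 * real c * ln (real (c + d)) \<le> real m * ln 2 / 20"
  shows "real (l * d) * real (l + 1) ^ (2 * c - 1) \<le> 2 powr (9/20 * real m)"
proof -
  note ln_l = ln_length_le[OF \<open>1 \<le> c\<close> l_le]
  have "2 * real c * ln (real l + 1) \<le> 2 * real c * ln 2 + 2 / 5 * real m * ln 2 + 2 * real c * ln (real c)"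
  proof -
    have "2 * real c * (ln 2 + real m / (5 * real c) * ln 2 + ln (real c))
        = 2 * real c * ln 2 + 2 / 5 * real m * ln 2 + 2 * real c * ln (real c)"
      using \<open>1 \<le> c\<close> by (simp add: field_simps)
    then show ?thesis
      using mult_left_mono[OF ln_l, of "2 * real c"] by simp
  qed
  moreover have "2 * real c * ln 2 \<le> 2 * real c * ln (real (c + d))"
    and "2 * real c * ln (real c) \<le> 2 * real c * ln (real (c + d))"
    using assms(1,2) by (simp_all add: mult_left_mono)
  moreover have "ln (real d) \<le> real c * ln (real (c + d))"
  proof -
    have "ln (real d) \<le> ln (real (c + d))"
      using assms(2) by simp
    also have "\<dots> \<le> real c * ln (real (c + d))"
      using assms(1,2) mult_right_mono[of 1 "real c" "ln (real (c + d))"] by simp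
    finally show ?thesis .
  qed
  moreover have "ln (real l) \<le> ln (real l + 1)"
    using \<open>1 \<le> l\<close> by simp
  moreover have "real (2 * c - 1) * ln (real l + 1) = 2 * real c * ln (real l + 1) - ln (real l + 1)"
    using \<open>1 \<le> c\<close> by (simp add: of_nat_diff left_diff_distrib)
  ultimately have "ln (real l) + ln (real d) + real (2 * c - 1) * ln (real l + 1) \<le> 9/20 * real m * ln 2"
    using small by linarith
  moreover have "ln (real (l * d) * real (l + 1) ^ (2 * c - 1))
      = ln (real l) + ln (real d) + real (2 * c - 1) * ln (real l + 1)"
    using assms(2,3) by (simp add: ln_mult ln_realpow add.commute)
  ultimately show ?thesis
    using assms(2,3) by (subst ln_le_cancel_iff[symmetric]) (simp_all add: ln_powr)
qed

lemma level_term_le: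
  fixes m c d l s u :: nat and q :: real
  assumes "1 \<le> c" and "1 \<le> d" and "1 \<le> l" and "real l \<le> length_bound m c"
    and small: "5 * real c * ln (real (c + d)) \<le> real m * ln 2 / 20"
    and "q * real l \<le> real s"
  shows "real (c * u) ^ l * (real (l * d) * real (l + 1) ^ (2 * c - 1) / 2 ^ m) ^ s
         \<le> (real c * real u * 2 powr (- 11/20 * real m * q)) ^ l"
proof -
  define w where "w = real (l * d) * real (l + 1) ^ (2 * c - 1) / 2 ^ m"
  have "w \<le> 2 powr (9/20 * real m) / 2 powr real m"
    unfolding w_def using weight_le[OF assms(1-5)] by (simp add: powr_realpow divide_right_mono)
  also have "\<dots> = 2 powr (- 11/20 * real m)"
    by (simp add: powr_diff[symmetric])
  finally have "w ^ s \<le> (2 powr (- 11/20 * real m)) ^ s"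
    by (intro power_mono) (simp_all add: w_def)
  also have "\<dots> = 2 powr (- 11/20 * real m * real s)"
    by (simp add: powr_realpow[symmetric] powr_powr)
  also have "\<dots> \<le> 2 powr (- 11/20 * real m * (q * real l))"
    using mult_left_mono[OF \<open>q * real l \<le> real s\<close>, of "11/20 * real m"] by (intro powr_mono) simp_all
  also have "\<dots> = (2 powr (- 11/20 * real m * q)) ^ l"
    by (simp add: powr_realpow[symmetric] powr_powr mult_ac)
  finally have "real (c * u) ^ l * w ^ s \<le> real (c * u) ^ l * (2 powr (- 11/20 * real m * q)) ^ l"
    by (intro mult_left_mono) simp_all
  then show ?thesis
    by (simp add: w_def power_mult_distrib)
qed

lemma sum_power_from_two_le:
  fixes t :: real
  assumes "0 \<le> t" and "t \<le> 1/2"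
  shows "(\<Sum>l\<in>{2..N}. t ^ l) \<le> 2 * t\<^sup>2"
proof (cases "N < 2")
  case False
  then have "(\<Sum>l\<in>{2..N}. t ^ l) = (t\<^sup>2 - t ^ Suc N) / (1 - t)"
    using assms by (simp add: sum_gp power2_eq_square)
  also have "\<dots> \<le> t\<^sup>2 / (1 - t)"
    using assms by (intro divide_right_mono) simp_all
  also have "\<dots> \<le> 2 * t\<^sup>2"
    using assms mult_left_mono[of "1/2" "1 - t" "2 * t\<^sup>2"] by (simp add: divide_le_eq)
  finally show ?thesis .
qed simp

lemma Pq_le_geometric_sum:
  assumes "1 \<le> c" and "1 \<le> d" and "q > 0"
    and small: "5 * real c * ln (real (c + d)) \<le> real m * ln 2 / 20"
  shows "Pq u m c d q \<le> (\<Sum>l\<in>{2..nat \<lfloor>length_bound m c\<rfloor>}.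
           (real c * real u * 2 powr (- 11/20 * real m * q)) ^ l)"
proof -
  have "Pq u m c d q \<le> (\<Sum>l\<in>{2..nat \<lfloor>length_bound m c\<rfloor>}.
         real (c * u) ^ l * (real (l * d) * real (l + 1) ^ (2 * c - 1) / 2 ^ m) ^ nat \<lceil>q * real l\<rceil>)"
    using \<open>q > 0\<close> by (rule Pq_le_sum)
  also have "\<dots> \<le> (\<Sum>l\<in>{2..nat \<lfloor>length_bound m c\<rfloor>}. (real c * real u * 2 powr (- 11/20 * real m * q)) ^ l)"
  proof (rule sum_mono)
    fix l assume "l \<in> {2..nat \<lfloor>length_bound m c\<rfloor>}"
    then have "1 \<le> l" and "real l \<le> real (nat \<lfloor>length_bound m c\<rfloor>)"
      by simp_all
    moreover have "real (nat \<lfloor>length_bound m c\<rfloor>) \<le> length_bound m c"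
      by (rule of_nat_floor) (simp add: length_bound_def)
    ultimately show "real (c * u) ^ l * (real (l * d) * real (l + 1) ^ (2 * c - 1) / 2 ^ m) ^ nat \<lceil>q * real l\<rceil>
        \<le> (real c * real u * 2 powr (- 11/20 * real m * q)) ^ l"
      using assms(1,2) small by (intro level_term_le real_nat_ceiling_ge) simp_all
  qed
  finally show ?thesis .
qed

lemma Pq_le_square:
  assumes "1 \<le> c" and "1 \<le> d" and "q > 0"
    and small: "5 * real c * ln (real (c + d)) \<le> real m * ln 2 / 20"
  shows "Pq u m c d q \<le> 4 * (real c * real u * 2 powr (- 11/20 * real m * q))\<^sup>2"
proof -
  define t where "t = real c * real u * 2 powr (- 11/20 * real m * q)"
  have "t \<ge> 0"
    by (simp add: t_def)
  consider "t \<le> 1/2" | "1/2 < t"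
    by linarith
  then have "Pq u m c d q \<le> 4 * t\<^sup>2"
  proof cases
    case 1
    have "Pq u m c d q \<le> 2 * t\<^sup>2"
      using Pq_le_geometric_sum[OF assms, of u, folded t_def]
        sum_power_from_two_le[OF \<open>t \<ge> 0\<close> 1, of "nat \<lfloor>length_bound m c\<rfloor>"] by linarith
    then show ?thesis
      using zero_le_power2[of t] by linarith
  next
    case 2
    have "Pq u m c d q \<le> 1"
      by (simp add: Pq_def)
    also have "\<dots> \<le> 4 * t\<^sup>2"
      using 2 mult_mono[of "1/2" t "1/2" t] by (simp add: power2_eq_square)
    finally show ?thesis .
  qed
  then show ?thesis
    by (simp add: t_def)
qed

lemma exp_ratio_le:
  fixes P a b g :: real
  assumes "0 \<le> P" and "P \<le> 1" and "P \<le> 4 * exp (2 * g + 2 * a - 11/10 * b)"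
    and "0 \<le> a" and "g \<le> a / 22"
  shows "P * exp (b - 2 * a) \<le> 4 * exp (- a / 11)"
proof (cases "b \<le> 21 * a / 11")
  case True
  have "P * exp (b - 2 * a) \<le> exp (b - 2 * a)"
    using assms(1,2) by (simp add: mult_left_le_one_le)
  also have "\<dots> \<le> exp (- a / 11)"
    using True by simp
  finally show ?thesis
    using exp_ge_zero[of "- a / 11"] by linarith
next
  case False
  have "P * exp (b - 2 * a) \<le> 4 * exp (2 * g + 2 * a - 11/10 * b) * exp (b - 2 * a)"
    using assms(3) by (simp add: mult_right_mono)
  also have "\<dots> = 4 * exp (2 * g - b / 10)"
    by (simp add: mult.assoc exp_add[symmetric])
  also have "\<dots> \<le> 4 * exp (- a / 11)"
    using False assms(4,5) by simp
  finally show ?thesis .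
qed

lemma Pq_ratio_le:
  assumes "1 \<le> c" and "1 \<le> d" and "q > 0" and "1 \<le> u"
    and small: "5 * real c * ln (real (c + d)) \<le> real m * ln 2 / 20"
    and few_positions: "ln (real c) \<le> ln (real u) / 22"
  shows "\<bar>Pq u m c d q / (real u ^ 2 / 2 powr (real m * q))\<bar> \<le> 4 * real u powr (- 1/11)"
proof -
  define a where "a = ln (real u)"
  define b where "b = real m * q * ln 2"
  define g where "g = ln (real c)"
  define P where "P = Pq u m c d q"
  have "0 \<le> P"
    by (simp add: P_def Pq_def)
  have "2 powr (- 11/20 * real m * q) = exp (- (11/20 * b))"
    unfolding powr_def b_def by (simp add: mult.assoc)
  moreover have "exp (g + a - 11/20 * b) = exp g * exp a * exp (- (11/20 * b))"
    by (simp add: exp_add[symmetric])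
  moreover have "exp g * exp a = real c * real u"
    using \<open>1 \<le> c\<close> \<open>1 \<le> u\<close> by (simp add: g_def a_def)
  moreover have "(exp (g + a - 11/20 * b))\<^sup>2 = exp (2 * g + 2 * a - 11/10 * b)"
    using exp_of_nat_mult[of 2 "g + a - 11/20 * b"] by (simp add: algebra_simps)
  ultimately have "P \<le> 4 * exp (2 * g + 2 * a - 11/10 * b)"
    using Pq_le_square[OF assms(1-3) small, of u] by (simp add: P_def)
  then have "P * exp (b - 2 * a) \<le> 4 * exp (- a / 11)"
    using \<open>0 \<le> P\<close> few_positions \<open>1 \<le> u\<close> by (intro exp_ratio_le) (simp_all add: P_def Pq_def a_def g_def)
  moreover have "real u ^ 2 = exp (2 * a)"
    using exp_of_nat_mult[of 2 a] \<open>1 \<le> u\<close> by (simp add: a_def)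
  then have "P / (real u ^ 2 / 2 powr (real m * q)) = P * exp (b - 2 * a)"
    by (simp add: b_def powr_def exp_diff mult_ac)
  moreover have "4 * real u powr (- 1/11) = 4 * exp (- a / 11)"
    using \<open>1 \<le> u\<close> by (simp add: a_def powr_def)
  ultimately show ?thesis
    using \<open>0 \<le> P\<close> by (simp add: P_def)
qed

theorem mainTheorem4:
  fixes u m c d :: "nat \<Rightarrow> nat" and q :: "nat \<Rightarrow> real"
  assumes "filterlim u at_top sequentially"
    and "\<And>n. c n \<ge> 1"
    and "\<And>n. d n \<ge> 1"
    and "(\<lambda>n. ln (real (c n))) \<in> o(\<lambda>n. ln (real (u n)))"
    and "(\<lambda>n. real (c n) * ln (real (c n + d n))) \<in> o(\<lambda>n. real (m n) * ln 2)"
    and "\<And>n. q n > 0"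
  shows "(\<lambda>n. Pq (u n) (m n) (c n) (d n) (q n))
           \<in> o(\<lambda>n. real (u n) ^ 2 / 2 powr (real (m n) * q n))"
proof (rule smalloI_tendsto)
  let ?ratio = "\<lambda>n. Pq (u n) (m n) (c n) (d n) (q n) / (real (u n) ^ 2 / 2 powr (real (m n) * q n))"
  have u_large: "eventually (\<lambda>n. 1 \<le> u n) sequentially"
    using assms(1) by (simp add: filterlim_at_top)
  have "eventually (\<lambda>n. \<bar>ln (real (c n))\<bar> \<le> 1/22 * \<bar>ln (real (u n))\<bar>) sequentially"
    using landau_o.smallD[OF assms(4), of "1/22"] by simp
  moreover have "eventually (\<lambda>n. \<bar>real (c n) * ln (real (c n + d n))\<bar> \<le> 1/100 * \<bar>real (m n) * ln 2\<bar>)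
      sequentially"
    using landau_o.smallD[OF assms(5), of "1/100"] by simp
  ultimately have "eventually (\<lambda>n. norm (?ratio n) \<le> 4 * real (u n) powr (- 1/11)) sequentially"
    using u_large unfolding real_norm_def
    by eventually_elim (use assms(2,3,6) in \<open>intro Pq_ratio_le, simp_all\<close>)
  moreover have "((\<lambda>n. 4 * real (u n) powr (- 1/11)) \<longlongrightarrow> 0) sequentially"
    using tendsto_neg_powr[OF _ filterlim_compose[OF filterlim_real_sequentially assms(1)], of "- 1/11"]
      tendsto_mult_right_zero[of _ sequentially 4] by simp
  ultimately show "(?ratio \<longlongrightarrow> 0) sequentially"
    by (rule Lim_null_comparison)
  show "eventually (\<lambda>n. real (u n) ^ 2 / 2 powr (real (m n) * q n) \<noteq> 0) sequentially"
    using u_large by eventually_elim simp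
qed

end
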